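(* If $X\sim\mathcal N(0,\Sigma)$ is an $n$-dimensional Gaussian random vector and $\rho(x)=\max\{0,x\}$ acts entrywise, then $\mathbb E\|\rho(X)\|_2\ge\frac12\mathbb E\|X\|_2$. *)

theory Defs
  imports "HOL-Probability.Probability"
begin

definition relu_vec :: "real^'n \<Rightarrow> real^'n" where
  "relu_vec x = (\<chi> i. max 0 (x $ i))"

definition centered_gaussian_vector ::
  "'a measure \<Rightarrow> ('a \<Rightarrow> real^'n) \<Rightarrow> real^'n^'n \<Rightarrow> bool" where
  "centered_gaussian_vector M X S \<longleftrightarrow>
     prob_space M \<and> X \<in> borel_measurable M \<and> transpose S = S \<and>
     (\<forall>u. distr M borel (\<lambda>\<omega>. u \<bullet> X \<omega>) =
        (if u \<bullet> (S *v u) = 0 then return borel 0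
         else density lborel (normal_density 0 (sqrt (u \<bullet> (S *v u))))))"

end

theory Submission
  imports Defs
begin

(* Every linear functional u \<bullet> X has a law depending on u only through u \<bullet> (S *v u), so X and
   -X have the same characteristic function and hence, by Fourier uniqueness, the same law. Thus
   E |relu X| = E |relu (-X)|, and X = relu X - relu (-X) gives |X| \<le> |relu X| + |relu (-X)|.

   Fourier uniqueness is proved for integrals of nonnegative continuous functions: these are
   limits of their truncations, and a bounded continuous function is the bounded pointwise limit
   of trigonometric polynomials, obtained from the Stone-Weierstrass theorem on a torus. *)

definition char_vec :: "(real^'n) measure \<Rightarrow> real^'n \<Rightarrow> complex" where
  "char_vec P t = (\<integral>x. iexp (t \<bullet> x) \<partial>P)"

inductive trig_poly :: "(real^'n \<Rightarrow> complex) \<Rightarrow> bool" where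
  trig_poly_iexp: "trig_poly (\<lambda>x. c * iexp (t \<bullet> x))"
| trig_poly_add: "trig_poly f \<Longrightarrow> trig_poly g \<Longrightarrow> trig_poly (\<lambda>x. f x + g x)"

lemma trig_poly_const: "trig_poly (\<lambda>x. c)"
  using trig_poly_iexp[of c 0] by simp

lemma trig_poly_mult_iexp:
  assumes "trig_poly g"
  shows "trig_poly (\<lambda>x. c * iexp (t \<bullet> x) * g x)"
  using assms
proof (induction rule: trig_poly.induct)
  case (trig_poly_iexp d u)
  have "(\<lambda>x. c * iexp (t \<bullet> x) * (d * iexp (u \<bullet> x))) = (\<lambda>x. (c * d) * iexp ((t + u) \<bullet> x))"
    by (simp add: fun_eq_iff inner_add_left algebra_simps exp_add)
  then show ?case
    by (simp only: trig_poly.trig_poly_iexp)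
next
  case (trig_poly_add f g)
  then show ?case
    by (simp add: distrib_left trig_poly.trig_poly_add)
qed

lemma trig_poly_mult:
  assumes "trig_poly f" "trig_poly g"
  shows "trig_poly (\<lambda>x. f x * g x)"
  using assms
proof (induction rule: trig_poly.induct)
  case (trig_poly_iexp c t)
  then show ?case
    by (rule trig_poly_mult_iexp)
next
  case (trig_poly_add f1 f2)
  then show ?case
    by (simp add: distrib_right trig_poly.trig_poly_add)
qed

lemma continuous_on_trig_poly: "trig_poly f \<Longrightarrow> continuous_on A f"
  by (induction rule: trig_poly.induct) (auto intro!: continuous_intros)

lemma trig_poly_bounded: "trig_poly f \<Longrightarrow> \<exists>B. \<forall>x. norm (f x) \<le> B"
proof (induction rule: trig_poly.induct)
  case (trig_poly_iexp c t)
  have "norm (c * iexp (t \<bullet> x)) \<le> norm c" for x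
    by (simp add: norm_mult)
  then show ?case
    by blast
next
  case (trig_poly_add f g)
  then obtain A B where "\<forall>x. norm (f x) \<le> A" "\<forall>x. norm (g x) \<le> B"
    by blast
  then have "\<forall>x. norm (f x + g x) \<le> A + B"
    by (meson add_mono norm_triangle_le)
  then show ?case
    by blast
qed

lemma integrable_trig_poly:
  assumes "finite_measure M" "sets M = sets borel" "trig_poly f"
  shows "integrable M f"
proof -
  interpret finite_measure M by fact
  obtain B where "\<forall>x. norm (f x) \<le> B"
    using trig_poly_bounded[OF assms(3)] by blast
  moreover have "f \<in> borel_measurable M"
    unfolding measurable_cong_sets[OF assms(2) refl]
    by (rule borel_measurable_continuous_onI[OF continuous_on_trig_poly[OF assms(3)]])
  ultimately show ?thesis
    by (intro integrable_const_bound[where B=B]) auto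
qed

lemma integral_trig_poly_eq:
  assumes P: "finite_measure P" "sets P = sets borel"
    and Q: "finite_measure Q" "sets Q = sets borel"
    and "char_vec P = char_vec Q"
  shows "trig_poly f \<Longrightarrow> (\<integral>x. f x \<partial>P) = (\<integral>x. f x \<partial>Q)"
proof (induction rule: trig_poly.induct)
  case (trig_poly_iexp c t)
  then show ?case
    using fun_cong[OF assms(5), of t] by (simp add: char_vec_def)
next
  case (trig_poly_add f g)
  then show ?case
    using integrable_trig_poly[OF P] integrable_trig_poly[OF Q] by simp
qed

inductive coord_poly :: "(complex^'n \<Rightarrow> real) \<Rightarrow> bool" where
  coord_poly_const: "coord_poly (\<lambda>z. c)"
| coord_poly_Re: "coord_poly (\<lambda>z. Re (z$i))"
| coord_poly_Im: "coord_poly (\<lambda>z. Im (z$i))"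
| coord_poly_add: "coord_poly p \<Longrightarrow> coord_poly q \<Longrightarrow> coord_poly (\<lambda>z. p z + q z)"
| coord_poly_mult: "coord_poly p \<Longrightarrow> coord_poly q \<Longrightarrow> coord_poly (\<lambda>z. p z * q z)"

lemma continuous_on_coord_poly: "coord_poly p \<Longrightarrow> continuous_on A p"
  by (induction rule: coord_poly.induct) (auto intro!: continuous_intros)

lemma coord_poly_separates_points:
  assumes "(z::complex^'n) \<noteq> w"
  shows "\<exists>p. coord_poly p \<and> p z \<noteq> p w"
proof -
  obtain i where "z$i \<noteq> w$i"
    using assms by (auto simp: vec_eq_iff)
  then have "Re (z$i) \<noteq> Re (w$i) \<or> Im (z$i) \<noteq> Im (w$i)"
    using complex_eqI by blast
  then show ?thesis
    using coord_poly_Re[of i] coord_poly_Im[of i] by blast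
qed

definition torus_map :: "real \<Rightarrow> real^'n \<Rightarrow> complex^'n" where
  "torus_map R x = (\<chi> i. iexp (pi / R * x$i))"

lemma continuous_on_torus_map: "continuous_on A (torus_map R)"
  unfolding torus_map_def by (intro continuous_intros)

lemma of_real_cos_iexp: "complex_of_real (cos a) = 1/2 * iexp a + 1/2 * iexp (- a)"
  by (simp add: cos_of_real[symmetric] cos_exp_eq field_simps)

lemma of_real_sin_iexp: "complex_of_real (sin a) = - \<i>/2 * iexp a + \<i>/2 * iexp (- a)"
  by (simp add: sin_of_real[symmetric] sin_exp_eq field_simps)

lemma trig_poly_coord_poly_torus_map:
  fixes p :: "complex^'n \<Rightarrow> real"
  assumes "coord_poly p"
  shows "trig_poly (\<lambda>x. complex_of_real (p (torus_map R x)))"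
  using assms
proof (induction rule: coord_poly.induct)
  case (coord_poly_const c)
  then show ?case
    by (simp add: trig_poly_const)
next
  case (coord_poly_Re i)
  have eq: "(\<lambda>x. complex_of_real (Re (torus_map R x $ i))) =
      (\<lambda>x. 1/2 * iexp ((pi / R) *\<^sub>R axis i 1 \<bullet> x) + 1/2 * iexp ((- (pi / R)) *\<^sub>R axis i 1 \<bullet> x))"
    by (simp add: fun_eq_iff torus_map_def Re_exp of_real_cos_iexp inner_axis')
  show ?case
    unfolding eq by (intro trig_poly_add trig_poly_iexp)
next
  case (coord_poly_Im i)
  have eq: "(\<lambda>x. complex_of_real (Im (torus_map R x $ i))) =
      (\<lambda>x. - \<i>/2 * iexp ((pi / R) *\<^sub>R axis i 1 \<bullet> x) + \<i>/2 * iexp ((- (pi / R)) *\<^sub>R axis i 1 \<bullet> x))"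
    by (simp add: fun_eq_iff torus_map_def Im_exp of_real_sin_iexp inner_axis')
  show ?case
    unfolding eq by (intro trig_poly_add trig_poly_iexp)
next
  case (coord_poly_add p q)
  then show ?case
    by (simp add: trig_poly_add)
next
  case (coord_poly_mult p q)
  then show ?case
    by (simp add: trig_poly_mult)
qed

lemma iexp_eq_iexp_iff: "iexp a = iexp b \<longleftrightarrow> (\<exists>n::int. a = b + 2 * pi * n)"
proof -
  have "iexp a = iexp b \<longleftrightarrow> (\<exists>n::int. \<i> * complex_of_real a = \<i> * complex_of_real b + complex_of_real (2 * pi * n) * \<i>)"
    by (simp add: exp_eq mult.commute mult.left_commute)
  also have "\<dots> \<longleftrightarrow> (\<exists>n::int. a = b + 2 * pi * n)"
    by (simp add: complex_eq_iff)
  finally show ?thesis .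
qed

definition cube :: "real \<Rightarrow> (real^'n) set" where
  "cube R = {x. \<forall>i. \<bar>x$i\<bar> \<le> R}"

lemma compact_cube: "compact (cube R)"
proof -
  have "cube R = cbox (\<chi> i. - R) (\<chi> i. R)"
    by (auto simp: cube_def mem_box_cart abs_le_iff) (meson minus_le_iff)+
  then show ?thesis
    using compact_cbox by metis
qed

lemma cball_subset_cube: "cball 0 R \<subseteq> cube R"
  using component_le_norm_cart order_trans by (fastforce simp: cube_def)

lemma torus_map_onto_cube:
  fixes x :: "real^'n"
  assumes "R > 0"
  shows "\<exists>y\<in>cube R. torus_map R y = torus_map R x"
proof -
  define k :: "'n \<Rightarrow> int" where "k i = round (x$i / (2 * R))" for i
  define y :: "real^'n" where "y = (\<chi> i. x$i - 2 * R * k i)"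
  have "\<bar>x$i / (2 * R) - k i\<bar> \<le> 1/2" for i
    unfolding k_def using of_int_round_abs_le[of "x$i / (2 * R)"] by (simp add: abs_minus_commute)
  then have "\<bar>y$i\<bar> \<le> R" for i
    using assms by (simp add: y_def field_simps abs_le_iff)
  moreover have "pi / R * y$i = pi / R * x$i + 2 * pi * (- k i)" for i
    using assms by (simp add: y_def field_simps)
  then have "iexp (pi / R * y$i) = iexp (pi / R * x$i)" for i
    unfolding iexp_eq_iexp_iff by blast
  then have "torus_map R y = torus_map R x"
    unfolding torus_map_def vec_eq_iff vec_lambda_beta by blast
  ultimately show ?thesis
    by (auto simp: cube_def)
qed

lemma torus_map_eq_imp_norm_ge:
  assumes "R > 0" "y \<in> cube R" "torus_map R x = torus_map R y" "x \<noteq> y"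
  shows "R \<le> norm x"
proof -
  obtain i where i: "x$i \<noteq> y$i"
    using assms(4) by (auto simp: vec_eq_iff)
  have "iexp (pi / R * x$i) = iexp (pi / R * y$i)"
    using assms(3) unfolding torus_map_def vec_eq_iff vec_lambda_beta by blast
  then obtain n :: int where "pi / R * x$i = pi / R * y$i + 2 * pi * n"
    unfolding iexp_eq_iexp_iff by blast
  then have "pi / R * x$i = pi / R * (y$i + 2 * R * n)"
    using assms(1) by (simp add: field_simps)
  then have xy: "x$i = y$i + 2 * R * n"
    using assms(1) by simp
  have y_bound: "\<bar>y$i\<bar> \<le> R"
    using assms(2) by (auto simp: cube_def)
  have "n \<noteq> 0"
    using xy i by auto
  then consider "1 \<le> n" | "n \<le> -1"
    by linarith
  then have "R \<le> \<bar>x$i\<bar>"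
  proof cases
    case 1
    have "2 * R * 1 \<le> 2 * R * n"
      using assms(1) 1 by (intro mult_left_mono) auto
    then show ?thesis
      using xy y_bound by linarith
  next
    case 2
    have "2 * R * n \<le> 2 * R * (-1)"
      using assms(1) 2 by (intro mult_left_mono) auto
    then show ?thesis
      using xy y_bound by linarith
  qed
  then show ?thesis
    using component_le_norm_cart[of x i] by simp
qed

lemma continuous_factor_through_compact:
  fixes E :: "'a::t2_space \<Rightarrow> 'b::t2_space" and g :: "'a \<Rightarrow> real"
  assumes K: "compact K" and E: "continuous_on K E" and g: "continuous_on K g"
    and fibres: "\<And>x y. x \<in> K \<Longrightarrow> y \<in> K \<Longrightarrow> E x = E y \<Longrightarrow> g x = g y"
  obtains h where "continuous_on (E ` K) h" "\<And>x. x \<in> K \<Longrightarrow> h (E x) = g x"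
proof -
  define h where "h z = g (SOME x. x \<in> K \<and> E x = z)" for z
  have hE: "h (E x) = g x" if "x \<in> K" for x
  proof -
    define y where "y = (SOME y. y \<in> K \<and> E y = E x)"
    have "y \<in> K" "E y = E x"
      unfolding y_def using someI_ex[of "\<lambda>y. y \<in> K \<and> E y = E x"] that by blast+
    then show ?thesis
      unfolding h_def y_def[symmetric] using fibres[of y x] that by blast
  qed
  have "continuous_on (E ` K) h"
    unfolding continuous_on_closed_vimage[OF compact_imp_closed[OF compact_continuous_image[OF E K]]]
  proof (intro allI impI)
    fix C :: "real set"
    assume "closed C"
    then have "closed (K \<inter> g -` C)"
      using g by (simp add: continuous_on_closed_vimage[OF compact_imp_closed[OF K]] Int_commute)
    then have "compact (K \<inter> g -` C)"
      using compact_Int_closed[OF K] by (metis Int_absorb Int_assoc)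
    then have "compact (E ` (K \<inter> g -` C))"
      using continuous_on_subset[OF E] by (blast intro: compact_continuous_image)
    moreover have "h -` C \<inter> E ` K = E ` (K \<inter> g -` C)"
      using hE by auto
    ultimately show "closed (h -` C \<inter> E ` K)"
      by (simp add: compact_imp_closed)
  qed
  with hE show thesis
    using that by blast
qed

lemma continuous_cutoff:
  fixes f :: "real^'n \<Rightarrow> real"
  assumes "continuous_on UNIV f" "\<And>x. \<bar>f x\<bar> \<le> B" "L > 0"
  obtains g where "continuous_on UNIV g" "\<And>x. \<bar>g x\<bar> \<le> B"
    "\<And>x. norm x \<le> L \<Longrightarrow> g x = f x" "\<And>x. 2 * L \<le> norm x \<Longrightarrow> g x = 0"
proof
  define \<phi> where "\<phi> x = max 0 (min 1 (2 - norm x / L))" for x :: "real^'n"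
  show "continuous_on UNIV (\<lambda>x. f x * \<phi> x)"
    unfolding \<phi>_def by (intro continuous_intros assms(1)) (use assms(3) in auto)
  show "\<bar>f x * \<phi> x\<bar> \<le> B" for x
  proof -
    have "\<bar>\<phi> x\<bar> \<le> 1"
      by (simp add: \<phi>_def)
    then show ?thesis
      using assms(2)[of x] by (simp add: abs_mult) (metis abs_ge_zero mult_left_le order_trans)
  qed
  show "f x * \<phi> x = f x" if "norm x \<le> L" for x
    using that assms(3) by (simp add: \<phi>_def field_simps)
  show "f x * \<phi> x = 0" if "2 * L \<le> norm x" for x
    using that assms(3) by (simp add: \<phi>_def field_simps)
qed

lemma trig_poly_approx:
  fixes f :: "real^'n \<Rightarrow> real"
  assumes f: "continuous_on UNIV f" "\<And>x. \<bar>f x\<bar> \<le> B" and "L > 0" "e > 0"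
  obtains T where "trig_poly (\<lambda>x. complex_of_real (T x))" "\<And>x. \<bar>T x\<bar> \<le> B + e"
    "\<And>x. norm x \<le> L \<Longrightarrow> \<bar>f x - T x\<bar> < e"
proof -
  define R where "R = 2 * L"
  have "R > 0"
    using \<open>L > 0\<close> by (simp add: R_def)
  obtain g where g: "continuous_on UNIV g" "\<And>x. \<bar>g x\<bar> \<le> B"
    "\<And>x. norm x \<le> L \<Longrightarrow> g x = f x" "\<And>x. R \<le> norm x \<Longrightarrow> g x = 0"
    using continuous_cutoff[OF f \<open>L > 0\<close>] unfolding R_def by metis
  \<comment> \<open>Distinct points of the cube with the same image lie outside the support of the cutoff,
    so g descends to the compact image of the cube.\<close>
  have "g x = g y" if "x \<in> cube R" "y \<in> cube R" "torus_map R x = torus_map R y" for x y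
    using torus_map_eq_imp_norm_ge[OF \<open>R > 0\<close>] g(4) that by metis
  then obtain h where h: "continuous_on (torus_map R ` cube R) h"
    "\<And>x. x \<in> cube R \<Longrightarrow> h (torus_map R x) = g x"
    using continuous_factor_through_compact[OF compact_cube continuous_on_torus_map
        continuous_on_subset[OF g(1)]] by blast
  have "\<exists>p. coord_poly p \<and> (\<forall>z\<in>torus_map R ` cube R. \<bar>h z - p z\<bar> < e)"
    by (intro Stone_Weierstrass_HOL compact_continuous_image compact_cube continuous_on_torus_map
        coord_poly_const continuous_on_coord_poly coord_poly_add coord_poly_mult
        coord_poly_separates_points h(1) \<open>e > 0\<close>) auto
  then obtain p where p: "coord_poly p" "\<And>x. x \<in> cube R \<Longrightarrow> \<bar>g x - p (torus_map R x)\<bar> < e"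
    using h(2) by force
  show thesis
  proof
    show "trig_poly (\<lambda>x. complex_of_real (p (torus_map R x)))"
      by (rule trig_poly_coord_poly_torus_map[OF p(1)])
    show "\<bar>p (torus_map R x)\<bar> \<le> B + e" for x
    proof -
      obtain y where "y \<in> cube R" "torus_map R y = torus_map R x"
        using torus_map_onto_cube[OF \<open>R > 0\<close>] by blast
      then show ?thesis
        using p(2)[of y] g(2)[of y] by auto
    qed
    show "\<bar>f x - p (torus_map R x)\<bar> < e" if "norm x \<le> L" for x
    proof -
      have "x \<in> cube R"
        using that cball_subset_cube[of R] \<open>L > 0\<close> by (force simp: R_def)
      then show ?thesis
        using p(2) g(3)[OF that] by force
    qed
  qed
qed

lemma integral_eq_if_char_vec_eq_bounded:
  fixes P Q :: "(real^'n) measure" and f :: "real^'n \<Rightarrow> real"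
  assumes P: "finite_measure P" "sets P = sets borel"
    and Q: "finite_measure Q" "sets Q = sets borel"
    and char: "char_vec P = char_vec Q"
    and f: "continuous_on UNIV f" "\<And>x. \<bar>f x\<bar> \<le> B"
  shows "(\<integral>x. f x \<partial>P) = (\<integral>x. f x \<partial>Q)"
proof -
  define e :: "nat \<Rightarrow> real" where "e k = inverse (real (Suc k))" for k
  have "\<exists>T. trig_poly (\<lambda>x. complex_of_real (T x)) \<and> (\<forall>x. \<bar>T x\<bar> \<le> B + e k) \<and>
      (\<forall>x. norm x \<le> real (Suc k) \<longrightarrow> \<bar>f x - T x\<bar> < e k)" for k
    by (rule trig_poly_approx[OF f, of "real (Suc k)" "e k"]) (auto simp: e_def)
  then obtain T where T: "\<And>k. trig_poly (\<lambda>x. complex_of_real (T k x))"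
    "\<And>k x. \<bar>T k x\<bar> \<le> B + e k" "\<And>k x. norm x \<le> real (Suc k) \<Longrightarrow> \<bar>f x - T k x\<bar> < e k"
    by metis
  have "continuous_on UNIV (T k)" for k
    using continuous_on_Re[OF continuous_on_trig_poly[OF T(1)]] by simp
  then have T_measurable: "T k \<in> borel_measurable borel" for k
    by (rule borel_measurable_continuous_onI)
  have T_lim: "(\<lambda>k. T k x) \<longlonglongrightarrow> f x" for x
  proof -
    obtain k0 :: nat where "norm x \<le> k0"
      using real_arch_simple by blast
    then have "\<forall>\<^sub>F k in sequentially. norm (T k x - f x) \<le> e k"
      unfolding eventually_sequentially
      by (intro exI[of _ k0] allI impI less_imp_le) (auto simp: abs_minus_commute intro!: T(3))
    moreover have "e \<longlonglongrightarrow> 0"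
      unfolding e_def by (rule LIMSEQ_inverse_real_of_nat)
    ultimately have "(\<lambda>k. T k x - f x) \<longlonglongrightarrow> 0"
      by (rule Lim_null_comparison)
    then show ?thesis
      by (simp add: LIM_zero_iff)
  qed
  have lim: "(\<lambda>k. \<integral>x. T k x \<partial>M) \<longlonglongrightarrow> (\<integral>x. f x \<partial>M)"
    if "finite_measure M" "sets M = sets borel" for M :: "(real^'n) measure"
  proof (rule integral_dominated_convergence[where w="\<lambda>_. B + 1"])
    interpret finite_measure M by fact
    show "f \<in> borel_measurable M"
      unfolding measurable_cong_sets[OF that(2) refl] by (rule borel_measurable_continuous_onI[OF f(1)])
    show "T k \<in> borel_measurable M" for k
      unfolding measurable_cong_sets[OF that(2) refl] by (rule T_measurable)
    show "integrable M (\<lambda>_. B + 1)"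
      by simp
    show "AE x in M. (\<lambda>k. T k x) \<longlonglongrightarrow> f x"
      using T_lim by simp
    show "AE x in M. norm (T k x) \<le> B + 1" for k
    proof (intro AE_I2)
      have "e k \<le> 1"
        by (simp add: e_def inverse_le_1_iff)
      then show "norm (T k x) \<le> B + 1" for x
        using T(2)[of k x] by simp
    qed
  qed
  have "(\<lambda>k. \<integral>x. T k x \<partial>P) = (\<lambda>k. \<integral>x. T k x \<partial>Q)"
    using integral_trig_poly_eq[OF P Q char T(1)] by simp
  then show ?thesis
    using LIMSEQ_unique lim[OF P] lim[OF Q] by metis
qed

lemma integral_eq_if_char_vec_eq_nonneg:
  fixes P Q :: "(real^'n) measure" and G :: "real^'n \<Rightarrow> real"
  assumes P: "finite_measure P" "sets P = sets borel"
    and Q: "finite_measure Q" "sets Q = sets borel"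
    and char: "char_vec P = char_vec Q"
    and G: "continuous_on UNIV G" "\<And>x. 0 \<le> G x"
  shows "(\<integral>x. G x \<partial>P) = (\<integral>x. G x \<partial>Q)"
proof -
  have G_measurable[measurable]: "G \<in> borel_measurable borel"
    by (rule borel_measurable_continuous_onI[OF G(1)])
  have truncation: "(\<integral>x. min (G x) k \<partial>P) = (\<integral>x. min (G x) k \<partial>Q)" for k :: nat
    by (rule integral_eq_if_char_vec_eq_bounded[OF P Q char, where B="real k"])
      (use G in \<open>auto intro!: continuous_intros\<close>)
  have lim: "(\<lambda>k. \<integral>\<^sup>+x. ennreal (min (G x) (real k)) \<partial>M) \<longlonglongrightarrow> (\<integral>\<^sup>+x. ennreal (G x) \<partial>M)"
    if "sets M = sets borel" for M :: "(real^'n) measure"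
  proof (rule nn_integral_LIMSEQ)
    show "incseq (\<lambda>k x. ennreal (min (G x) (real k)))"
      by (auto simp: incseq_def le_fun_def intro!: ennreal_leI)
    show "(\<lambda>x. ennreal (min (G x) (real k))) \<in> borel_measurable M" for k
      unfolding measurable_cong_sets[OF that refl] by measurable
    show "(\<lambda>k. ennreal (min (G x) (real k))) \<longlonglongrightarrow> ennreal (G x)" for x
    proof (rule tendsto_eventually)
      obtain k0 :: nat where "G x \<le> k0"
        using real_arch_simple by blast
      then show "\<forall>\<^sub>F k in sequentially. ennreal (min (G x) (real k)) = ennreal (G x)"
        unfolding eventually_sequentially by (intro exI[of _ k0]) auto
    qed
  qed
  have nn_truncation: "(\<integral>\<^sup>+x. ennreal (min (G x) (real k)) \<partial>M) = ennreal (\<integral>x. min (G x) (real k) \<partial>M)"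
    if "finite_measure M" "sets M = sets borel" for M :: "(real^'n) measure" and k
  proof (rule nn_integral_eq_integral)
    interpret finite_measure M by fact
    have "(\<lambda>x. min (G x) (real k)) \<in> borel_measurable M"
      unfolding measurable_cong_sets[OF that(2) refl] by measurable
    then show "integrable M (\<lambda>x. min (G x) (real k))"
      using G(2) by (intro integrable_const_bound[where B="real k"]) auto
  qed (use G(2) in auto)
  have "(\<lambda>k. \<integral>\<^sup>+x. ennreal (min (G x) (real k)) \<partial>P) = (\<lambda>k. \<integral>\<^sup>+x. ennreal (min (G x) (real k)) \<partial>Q)"
    using nn_truncation[OF P] nn_truncation[OF Q] truncation by simp
  then have "(\<integral>\<^sup>+x. ennreal (G x) \<partial>P) = (\<integral>\<^sup>+x. ennreal (G x) \<partial>Q)"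
    using LIMSEQ_unique lim[OF P(2)] lim[OF Q(2)] by metis
  then show ?thesis
    using G(2) G_measurable
    by (simp add: integral_eq_nn_integral measurable_cong_sets[OF P(2) refl] measurable_cong_sets[OF Q(2) refl])
qed

lemma char_vec_distr:
  assumes "X \<in> borel_measurable M"
  shows "char_vec (distr M borel X) t = (\<integral>s. iexp s \<partial>distr M borel (\<lambda>\<omega>. t \<bullet> X \<omega>))"
proof -
  have "char_vec (distr M borel X) t = (\<integral>\<omega>. iexp (t \<bullet> X \<omega>) \<partial>M)"
    unfolding char_vec_def using assms by (intro integral_distr) (auto intro!: borel_measurable_continuous_onI continuous_intros)
  also have "\<dots> = (\<integral>s. iexp s \<partial>distr M borel (\<lambda>\<omega>. t \<bullet> X \<omega>))"
    using assms by (intro integral_distr[symmetric]) (auto intro!: borel_measurable_continuous_onI continuous_intros)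
  finally show ?thesis .
qed

lemma centered_gaussian_vector_char_vec_uminus:
  fixes M :: "'a measure" and X :: "'a \<Rightarrow> real^'n" and S :: "real^'n^'n"
  assumes "centered_gaussian_vector M X S"
  shows "char_vec (distr M borel X) = char_vec (distr M borel (\<lambda>\<omega>. - X \<omega>))"
proof
  fix t :: "real^'n"
  have X: "X \<in> borel_measurable M"
    and distr_inner: "\<And>u. distr M borel (\<lambda>\<omega>. u \<bullet> X \<omega>) =
        (if u \<bullet> (S *v u) = 0 then return borel 0
         else density lborel (normal_density 0 (sqrt (u \<bullet> (S *v u)))))"
    using assms by (simp_all add: centered_gaussian_vector_def)
  have "S *v (- t) = - (S *v t)"
    by (simp add: vec_eq_iff matrix_vector_mult_def sum_negf)
  then have "(- t) \<bullet> (S *v (- t)) = t \<bullet> (S *v t)"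
    by simp
  then have "distr M borel (\<lambda>\<omega>. t \<bullet> X \<omega>) = distr M borel (\<lambda>\<omega>. t \<bullet> - X \<omega>)"
    using distr_inner[of t] distr_inner[of "- t"] by simp
  then show "char_vec (distr M borel X) t = char_vec (distr M borel (\<lambda>\<omega>. - X \<omega>)) t"
    using X by (simp add: char_vec_distr)
qed

lemma integral_comp_eq_if_char_vec_eq:
  fixes X Y :: "'a \<Rightarrow> real^'n" and G :: "real^'n \<Rightarrow> real"
  assumes "finite_measure M" "X \<in> borel_measurable M" "Y \<in> borel_measurable M"
    and "char_vec (distr M borel X) = char_vec (distr M borel Y)"
    and G: "continuous_on UNIV G" "\<And>x. 0 \<le> G x"
  shows "(\<integral>\<omega>. G (X \<omega>) \<partial>M) = (\<integral>\<omega>. G (Y \<omega>) \<partial>M)"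
proof -
  have G_measurable: "G \<in> borel_measurable borel"
    by (rule borel_measurable_continuous_onI[OF G(1)])
  have "finite_measure (distr M borel Z)" if "Z \<in> borel_measurable M" for Z :: "'a \<Rightarrow> real^'n"
    using assms(1) by (rule finite_measure.finite_measure_distr[OF _ that])
  then have "(\<integral>x. G x \<partial>distr M borel X) = (\<integral>x. G x \<partial>distr M borel Y)"
    using assms by (intro integral_eq_if_char_vec_eq_nonneg) auto
  then show ?thesis
    using assms(2,3) G_measurable by (simp add: integral_distr)
qed

lemma continuous_on_relu_vec: "continuous_on A relu_vec"
  unfolding relu_vec_def by (intro continuous_intros)

lemma norm_relu_vec_le: "norm (relu_vec x) \<le> norm x"
  by (rule norm_le_componentwise_cart) (simp add: relu_vec_def)

lemma relu_vec_diff_relu_vec_uminus: "relu_vec x - relu_vec (- x) = x"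
  by (simp add: relu_vec_def vec_eq_iff max_def)

theorem mainTheorem17:
  fixes M :: "'a measure" and X :: "'a \<Rightarrow> real^'n" and S :: "real^'n^'n"
  assumes "centered_gaussian_vector M X S"
  shows "(\<integral>\<omega>. norm (relu_vec (X \<omega>)) \<partial>M) \<ge> 1/2 * (\<integral>\<omega>. norm (X \<omega>) \<partial>M)"
proof (cases "integrable M (\<lambda>\<omega>. norm (X \<omega>))")
  case False
  \<comment> \<open>the right-hand side is then 0 by the convention for non-integrable functions\<close>
  then show ?thesis
    by (simp add: not_integrable_integral_eq)
next
  case True
  have M: "finite_measure M" and X: "X \<in> borel_measurable M"
    using assms by (auto simp: centered_gaussian_vector_def prob_space_def)
  have symmetric: "(\<integral>\<omega>. norm (relu_vec (X \<omega>)) \<partial>M) = (\<integral>\<omega>. norm (relu_vec (- X \<omega>)) \<partial>M)"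
    using M X centered_gaussian_vector_char_vec_uminus[OF assms]
    by (intro integral_comp_eq_if_char_vec_eq) (auto intro!: continuous_intros continuous_on_relu_vec)
  have integrable: "integrable M (\<lambda>\<omega>. norm (relu_vec (Y \<omega>)))"
    if Y: "Y \<in> borel_measurable M" "\<And>\<omega>. norm (Y \<omega>) = norm (X \<omega>)" for Y
  proof (rule Bochner_Integration.integrable_bound[OF True])
    show "(\<lambda>\<omega>. norm (relu_vec (Y \<omega>))) \<in> borel_measurable M"
      by (intro measurable_compose[OF Y(1)] borel_measurable_continuous_onI
          continuous_intros continuous_on_relu_vec)
    show "AE \<omega> in M. norm (norm (relu_vec (Y \<omega>))) \<le> norm (norm (X \<omega>))"
      by (intro AE_I2) (simp add: Y(2)[symmetric] norm_relu_vec_le)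
  qed
  have minus_X: "(\<lambda>\<omega>. - X \<omega>) \<in> borel_measurable M"
    using X by measurable
  have relu_integrable: "integrable M (\<lambda>\<omega>. norm (relu_vec (X \<omega>)))" "integrable M (\<lambda>\<omega>. norm (relu_vec (- X \<omega>)))"
    using integrable[OF X] integrable[OF minus_X] by simp_all
  have "norm (X \<omega>) \<le> norm (relu_vec (X \<omega>)) + norm (relu_vec (- X \<omega>))" for \<omega>
    using norm_triangle_ineq4[of "relu_vec (X \<omega>)" "relu_vec (- X \<omega>)"]
    by (simp add: relu_vec_diff_relu_vec_uminus)
  then have "(\<integral>\<omega>. norm (X \<omega>) \<partial>M) \<le> (\<integral>\<omega>. norm (relu_vec (X \<omega>)) + norm (relu_vec (- X \<omega>)) \<partial>M)"
    using True relu_integrable by (intro integral_mono) auto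
  also have "\<dots> = 2 * (\<integral>\<omega>. norm (relu_vec (X \<omega>)) \<partial>M)"
    using relu_integrable symmetric by simp
  finally show ?thesis
    by simp
qed

end
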